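(* Let $K$ be a field and let $f(X)\in XK[X^2]$ be a monic polynomial. If $f(X)=g(X)\circ h(X)$ with $g,h\in K[X]$, where the characteristic of $K$ does not divide $\deg(g)$, then there exists a degree-one $\rho(X)\in K[X]$ such that both $g(\rho(X))$ and $\rho^{-1}(h(X))$ are monic polynomials in $XK[X^2]$.
   Context: $XK[X^2]$ denotes the set of polynomials all of whose terms have odd degree. For a degree-one $\rho(X)=aX+b\in K[X]$, $\rho^{-1}(X):=(X-b)/a$ is its compositional inverse. If $\mathrm{char}(K)=0$ the divisibility hypothesis holds automatically. *)

theory Defs
  imports "HOL-Computational_Algebra.Polynomial"
begin

text \<open>p lies in X K[X^2]: every nonzero coefficient sits in odd degree.\<close>
definition odd_poly :: "'a::zero poly \<Rightarrow> bool" where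
  "odd_poly p \<longleftrightarrow> (\<forall>i. coeff p i \<noteq> 0 \<longrightarrow> odd i)"

text \<open>Compositional inverse of the degree-one polynomial a X + b, namely (X - b)/a.\<close>
definition lin_inv :: "'a::field poly \<Rightarrow> 'a poly" where
  "lin_inv r = [: - coeff r 0 / coeff r 1, 1 / coeff r 1 :]"

end

theory Submission
  imports Defs
begin

(* After an affine change of variable we may assume h monic with h(0) = 0; then g is monic
   too, and n = deg g, m = deg h are odd because deg f = n m is.  Split h = d + e into its
   odd and even parts.  If e has degree k > 0 (necessarily even and < m), then h^n - d^n has
   the nonzero coefficient n lc(e) in the even degree k + m (n - 1).  But f - d^n is odd, and
   f - h^n = (g - X^n) o h has degree at most m (n - 1): a contradiction, so h is odd.
   Finally, the even part of g composed with the odd h is both odd and even, hence zero. *)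

definition poly_parity :: "bool \<Rightarrow> 'a::zero poly \<Rightarrow> bool" where
  "poly_parity b p \<longleftrightarrow> (\<forall>i. coeff p i \<noteq> 0 \<longrightarrow> odd i = b)"

lemma odd_poly_iff_poly_parity: "odd_poly p \<longleftrightarrow> poly_parity True p"
  by (simp add: odd_poly_def poly_parity_def)

lemma poly_parity_0 [simp]: "poly_parity b 0"
  by (simp add: poly_parity_def)

lemma poly_parity_pCons:
  "poly_parity b (pCons a p) \<longleftrightarrow> (b \<longrightarrow> a = 0) \<and> poly_parity (\<not> b) p"
  unfolding poly_parity_def
  by (metis (mono_tags) coeff_pCons_0 coeff_pCons_Suc even_Suc even_zero not0_implies_Suc)

lemma poly_parity_add:
  fixes p q :: "'a::comm_monoid_add poly"
  shows "poly_parity b p \<Longrightarrow> poly_parity b q \<Longrightarrow> poly_parity b (p + q)"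
  unfolding poly_parity_def by (metis add.right_neutral add_0 coeff_add)

lemma poly_parity_diff:
  fixes p q :: "'a::ab_group_add poly"
  shows "poly_parity b p \<Longrightarrow> poly_parity b q \<Longrightarrow> poly_parity b (p - q)"
  unfolding poly_parity_def by (metis coeff_diff diff_zero diff_self)

lemma poly_parity_mult:
  fixes p q :: "'a::comm_semiring_0 poly"
  assumes "poly_parity a p" "poly_parity b q"
  shows "poly_parity (a \<noteq> b) (p * q)"
  unfolding poly_parity_def
proof (intro allI impI)
  fix n assume "coeff (p * q) n \<noteq> 0"
  then obtain i where "i \<le> n" "coeff p i \<noteq> 0" "coeff q (n - i) \<noteq> 0"
    unfolding coeff_mult by (metis (no_types, lifting) atMost_iff mult_not_zero sum.neutral)
  with assms have "odd i = a" "odd (n - i) = b" "n = i + (n - i)"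
    unfolding poly_parity_def by auto
  then show "odd n = (a \<noteq> b)" by (metis odd_add)
qed

lemma poly_parity_power:
  fixes p :: "'a::comm_semiring_1 poly"
  assumes "poly_parity True p"
  shows "poly_parity (odd k) (p ^ k)"
proof (induction k)
  case 0
  show ?case by (simp add: poly_parity_def coeff_1)
next
  case (Suc k)
  with poly_parity_mult[OF assms] show ?case by fastforce
qed

lemma poly_parity_pcompose:
  fixes p q :: "'a::comm_semiring_0 poly"
  assumes "poly_parity True q"
  shows "poly_parity b p \<Longrightarrow> poly_parity b (pcompose p q)"
proof (induction p arbitrary: b)
  case (pCons a p)
  then have "poly_parity b [:a:]" "poly_parity b (q * pcompose p q)"
    using poly_parity_mult[OF assms pCons.IH, of "\<not> b"]
    by (auto simp: poly_parity_pCons)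
  then show ?case by (simp add: pcompose_pCons poly_parity_add)
qed simp

lemma poly_parity_odd_and_even_eq_0:
  "poly_parity True p \<Longrightarrow> poly_parity False p \<Longrightarrow> p = 0"
  unfolding poly_parity_def by (metis leading_coeff_0_iff)

lemma poly_parity_decompose:
  fixes p :: "'a::comm_monoid_add poly"
  obtains e d where "p = e + d" "poly_parity False e" "poly_parity True d"
proof -
  have "\<exists>e d. p = e + d \<and> poly_parity False e \<and> poly_parity True d"
  proof (induction p)
    case (pCons a p)
    then obtain e d where "p = e + d" "poly_parity False e" "poly_parity True d"
      by blast
    then have "pCons a p = pCons a d + pCons 0 e \<and> poly_parity False (pCons a d) \<and>
        poly_parity True (pCons 0 e)"
      by (simp add: poly_parity_pCons add.commute)
    then show ?case by blast
  qed (metis add_0 poly_parity_0)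
  then show ?thesis using that by blast
qed

lemma coeff_add_poly_parity:
  fixes e d :: "'a::comm_monoid_add poly"
  assumes "poly_parity False e" "poly_parity True d"
  shows "coeff (e + d) i = (if odd i then coeff d i else coeff e i)"
  using assms unfolding poly_parity_def by (metis add.left_neutral add.right_neutral coeff_add)

lemma odd_poly_left_of_pcompose:
  fixes g h :: "'a::idom poly"
  assumes "odd_poly (pcompose g h)" "odd_poly h" "degree h > 0"
  shows "odd_poly g"
proof -
  obtain e d where g_split: "g = e + d" and e: "poly_parity False e" and d: "poly_parity True d"
    using poly_parity_decompose .
  have h_odd: "poly_parity True h"
    using assms(2) by (simp add: odd_poly_iff_poly_parity)
  have "pcompose e h = pcompose g h - pcompose d h"
    by (simp add: g_split pcompose_add)
  then have "poly_parity True (pcompose e h)"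
    using assms(1) poly_parity_pcompose[OF h_odd d]
    by (simp add: odd_poly_iff_poly_parity poly_parity_diff)
  with poly_parity_pcompose[OF h_odd e] have "pcompose e h = 0"
    by (simp add: poly_parity_odd_and_even_eq_0)
  then have "e = 0"
    using pcompose_eq_0 assms(3) by blast
  then show ?thesis
    using d g_split by (simp add: odd_poly_iff_poly_parity)
qed

lemma coeff_mult_degree_le:
  fixes p q :: "'a::idom poly"
  assumes "degree q \<le> d"
  shows "coeff (p * q) (degree p + d) = lead_coeff p * coeff q d"
proof (cases "degree q = d")
  case False
  then have "degree (p * q) < degree p + d \<or> p * q = 0"
    using assms degree_mult_le[of p q] by fastforce
  with False assms show ?thesis
    by (metis coeff_0 coeff_eq_0 le_neq_implies_less mult_zero_right)
qed (use coeff_mult_degree_sum[of p q] in simp)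

lemma coeff_power_add_minus_power:
  fixes p q :: "'a::idom poly"
  assumes "degree q < degree p"
  shows "coeff ((p + q) ^ n - p ^ n) (degree q + degree p * (n - 1))
           = of_nat n * lead_coeff q * lead_coeff p ^ (n - 1)"
proof -
  define m where "m = degree p"
  define T where "T i = p ^ (n - Suc i) * (p + q) ^ i" for i
  have "degree (p + q) = m" "lead_coeff (p + q) = lead_coeff p"
    using assms by (simp_all add: m_def degree_add_eq_left coeff_eq_0)
  moreover have "p \<noteq> 0" "p + q \<noteq> 0"
    using assms calculation(1) m_def by auto
  ultimately have T: "degree (T i) = m * (n - 1) \<and> lead_coeff (T i) = lead_coeff p ^ (n - 1)"
    if "i < n" for i
  proof -
    have "degree (T i) = m * (n - Suc i + i)"
      using \<open>p \<noteq> 0\<close> \<open>p + q \<noteq> 0\<close> \<open>degree (p + q) = m\<close>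
      by (simp add: T_def degree_mult_eq degree_power_eq m_def algebra_simps)
    moreover have "lead_coeff (T i) = lead_coeff p ^ (n - Suc i + i)"
      unfolding T_def lead_coeff_mult lead_coeff_power \<open>lead_coeff (p + q) = lead_coeff p\<close>
      by (simp add: power_add)
    moreover have "n - Suc i + i = n - 1"
      using that by simp
    ultimately show ?thesis by simp
  qed
  have "(p + q) ^ n - p ^ n = q * sum T {..<n}"
    unfolding T_def power_diff_sumr2 by simp
  moreover have "degree (sum T {..<n}) \<le> m * (n - 1)"
    using T by (intro degree_sum_le) auto
  moreover have "coeff (sum T {..<n}) (m * (n - 1)) = (\<Sum>i<n. lead_coeff p ^ (n - 1))"
    unfolding coeff_sum by (intro sum.cong refl) (metis T lessThan_iff)
  ultimately show ?thesis
    by (simp add: coeff_mult_degree_le m_def mult.assoc)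
qed

lemma odd_poly_if_power_close_to_odd_poly:
  fixes F h :: "'a::idom poly"
  assumes F: "odd_poly F" and odd_deg: "odd (degree h)" and h0: "coeff h 0 = 0"
    and "odd n" and n0: "of_nat n \<noteq> (0::'a)"
    and close: "degree (F - h ^ n) \<le> degree h * (n - 1)"
  shows "odd_poly h"
proof (rule ccontr)
  assume not_odd: "\<not> odd_poly h"
  obtain e d where h_split: "h = d + e" and e: "poly_parity False e" and d: "poly_parity True d"
    using poly_parity_decompose by (metis add.commute)
  have coeff_h: "coeff h i = (if odd i then coeff d i else coeff e i)" for i
    unfolding h_split add.commute[of d] by (rule coeff_add_poly_parity[OF e d])
  define k where "k = degree e"
  have "e \<noteq> 0"
    using h_split d not_odd by (auto simp: odd_poly_iff_poly_parity)
  then have "coeff e k \<noteq> 0"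
    by (simp add: k_def)
  with e have "even k"
    by (simp add: poly_parity_def)
  have "k \<noteq> 0"
    using coeff_h[of 0] h0 \<open>coeff e k \<noteq> 0\<close> by (metis even_zero)
  have "coeff h k \<noteq> 0"
    using coeff_h[of k] \<open>even k\<close> \<open>coeff e k \<noteq> 0\<close> by simp
  then have "k \<le> degree h"
    by (rule le_degree)
  with \<open>even k\<close> odd_deg have "k < degree h"
    by (cases "k = degree h") auto
  have "degree d = degree h"
  proof (rule antisym)
    show "degree d \<le> degree h"
      using h_split \<open>k \<le> degree h\<close> degree_diff_le[of h "degree h" e] by (simp add: k_def)
    show "degree h \<le> degree d"
    proof (rule le_degree)
      have "lead_coeff h \<noteq> 0"
        using odd_deg by (metis degree_0 even_zero leading_coeff_0_iff)
      then show "coeff d (degree h) \<noteq> 0"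
        using coeff_h[of "degree h"] odd_deg by simp
    qed
  qed
  define N where "N = k + degree h * (n - 1)"
  have "even N"
    using \<open>even k\<close> \<open>odd n\<close> by (simp add: N_def)
  have "coeff (h ^ n - d ^ n) N = of_nat n * lead_coeff e * lead_coeff d ^ (n - 1)"
    using coeff_power_add_minus_power[of e d n] \<open>k < degree h\<close> \<open>degree d = degree h\<close>
    unfolding N_def k_def h_split by simp
  also have "\<dots> \<noteq> 0"
  proof -
    have "d \<noteq> 0"
      using \<open>degree d = degree h\<close> odd_deg by (metis degree_0 even_zero)
    with n0 \<open>e \<noteq> 0\<close> show ?thesis
      by simp
  qed
  finally have "coeff (h ^ n - d ^ n) N \<noteq> 0" .
  moreover have "coeff (F - d ^ n) N = 0"
  proof -
    have "poly_parity True (F - d ^ n)"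
      using F poly_parity_power[OF d, of n] \<open>odd n\<close>
      by (simp add: odd_poly_iff_poly_parity poly_parity_diff)
    with \<open>even N\<close> show ?thesis
      by (auto simp: poly_parity_def)
  qed
  moreover have "coeff (F - h ^ n) N = 0"
    using close \<open>k \<noteq> 0\<close> by (intro coeff_eq_0) (simp add: N_def)
  moreover have "coeff (h ^ n - d ^ n) N = coeff (F - d ^ n) N - coeff (F - h ^ n) N"
    by simp
  ultimately show False
    by simp
qed

lemma pcompose_monom_1: "pcompose (monom 1 n) q = q ^ n"
  for q :: "'a::comm_semiring_1 poly"
  by (induction n) (simp_all add: monom_Suc pcompose_pCons monom_0)

lemma degree_pcompose_minus_power_le:
  fixes g h :: "'a::comm_ring_1 poly"
  assumes "lead_coeff g = 1"
  shows "degree (pcompose g h - h ^ degree g) \<le> degree h * (degree g - 1)"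
proof -
  have "degree (g - monom 1 (degree g)) \<le> degree g - 1"
  proof (rule degree_le, intro allI impI)
    fix i assume "degree g - 1 < i"
    then have "i = degree g \<or> degree g < i"
      by linarith
    then show "coeff (g - monom 1 (degree g)) i = 0"
      using assms by (auto simp: coeff_monom coeff_eq_0)
  qed
  then have "degree (pcompose (g - monom 1 (degree g)) h) \<le> (degree g - 1) * degree h"
    by (meson degree_pcompose_le le_trans mult_le_mono1)
  then show ?thesis
    by (simp add: pcompose_diff pcompose_monom_1 mult.commute)
qed

lemma pcompose_lin_inv:
  fixes \<rho> :: "'a::field poly"
  assumes "degree \<rho> = 1"
  shows "pcompose \<rho> (lin_inv \<rho>) = [:0, 1:]"
proof -
  define a b where "a = coeff \<rho> 1" and "b = coeff \<rho> 0"
  have "\<rho> = [:b, a:]"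
    using assms by (intro poly_eqI) (auto simp: a_def b_def coeff_pCons coeff_eq_0 split: nat.split)
  moreover have "a \<noteq> 0"
    unfolding a_def using assms by (metis leading_coeff_0_iff one_neq_zero degree_0)
  ultimately show ?thesis
    unfolding lin_inv_def by (simp add: pcompose_pCons field_simps)
qed

lemma lin_inv_normalize:
  fixes h :: "'a::field poly"
  assumes "degree h > 0"
  obtains \<rho> where "degree \<rho> = 1" "pcompose \<rho> (pcompose (lin_inv \<rho>) h) = h"
    "lead_coeff (pcompose (lin_inv \<rho>) h) = 1" "coeff (pcompose (lin_inv \<rho>) h) 0 = 0"
proof
  define \<rho> where "\<rho> = [:coeff h 0, lead_coeff h:]"
  have "lead_coeff h \<noteq> 0"
    using assms by auto
  then have lin_inv: "lin_inv \<rho> = [:- coeff h 0 / lead_coeff h, 1 / lead_coeff h:]"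
    by (simp add: lin_inv_def \<rho>_def)
  show "degree \<rho> = 1"
    using \<open>lead_coeff h \<noteq> 0\<close> by (simp add: \<rho>_def)
  then show "pcompose \<rho> (pcompose (lin_inv \<rho>) h) = h"
    by (simp add: pcompose_assoc pcompose_lin_inv pcompose_pCons)
  show "lead_coeff (pcompose (lin_inv \<rho>) h) = 1"
    using assms \<open>lead_coeff h \<noteq> 0\<close>
    by (simp add: lin_inv lead_coeff_comp)
  show "coeff (pcompose (lin_inv \<rho>) h) 0 = 0"
    using \<open>lead_coeff h \<noteq> 0\<close> by (simp add: lin_inv pcompose_pCons field_simps)
qed

theorem lemma2p4:
  fixes f g h :: "'a::field poly"
  assumes "lead_coeff f = 1"
    and "odd_poly f"
    and "f = pcompose g h"
    and "of_nat (degree g) \<noteq> (0::'a)"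
  shows "\<exists>\<rho>. degree \<rho> = 1 \<and>
           lead_coeff (pcompose g \<rho>) = 1 \<and> odd_poly (pcompose g \<rho>) \<and>
           lead_coeff (pcompose (lin_inv \<rho>) h) = 1 \<and> odd_poly (pcompose (lin_inv \<rho>) h)"
proof -
  have "odd (degree f)"
    using assms(1,2) by (simp add: odd_poly_def)
  then have "odd (degree g)" "odd (degree h)"
    by (simp_all add: assms(3) degree_pcompose)
  obtain \<rho> where \<rho>: "degree \<rho> = 1" and h_eq: "pcompose \<rho> (pcompose (lin_inv \<rho>) h) = h"
    and h1: "lead_coeff (pcompose (lin_inv \<rho>) h) = 1" "coeff (pcompose (lin_inv \<rho>) h) 0 = 0"
    using lin_inv_normalize \<open>odd (degree h)\<close> odd_pos by blast
  define g1 h1 where "g1 = pcompose g \<rho>" and "h1 = pcompose (lin_inv \<rho>) h"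
  have f: "f = pcompose g1 h1"
    by (simp add: assms(3) g1_def h1_def pcompose_assoc[symmetric] h_eq)
  have "degree h1 = degree h" "degree g1 = degree g"
    using \<rho> arg_cong[OF h_eq, of degree] by (simp_all add: g1_def h1_def degree_pcompose)
  then have "lead_coeff g1 = 1"
    using assms(1) lead_coeff_comp[of h1 g1] \<open>odd (degree h)\<close> odd_pos h1 by (simp add: f h1_def)
  then have "degree (f - h1 ^ degree g) \<le> degree h1 * (degree g - 1)"
    using degree_pcompose_minus_power_le[of g1 h1] by (simp add: f \<open>degree g1 = degree g\<close>)
  then have "odd_poly h1"
    using odd_poly_if_power_close_to_odd_poly[OF assms(2)] assms(4) h1 \<open>odd (degree g)\<close>
      \<open>odd (degree h)\<close> \<open>degree h1 = degree h\<close> by (simp add: h1_def)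
  moreover have "odd_poly g1"
    using odd_poly_left_of_pcompose[OF _ \<open>odd_poly h1\<close>] assms(2) f \<open>degree h1 = degree h\<close>
      \<open>odd (degree h)\<close> odd_pos by auto
  ultimately show ?thesis
    using \<rho> \<open>lead_coeff g1 = 1\<close> h1 by (auto simp: g1_def h1_def)
qed

end
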